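(* For every positive integer $t$, setting $n=3\cdot 2^{2t-1}+1$, there exists an equiangular set of $\frac{2}{9}(n-1)(n+2)$ lines in $\mathbb{R}^n$.
   Context: A set of lines in $\mathbb{R}^n$ (or $\mathbb{C}^n$) spanned by unit vectors $v_1,\dots,v_r$ is equiangular if there is a constant $c$ such that $|\langle v_i,v_j\rangle|=c$ for all $1\le i<j\le r$. *)

theory Defs
  imports Complex_Main
begin

text \<open>Vectors of R^n are represented as functions nat => real vanishing outside {0..<n};
  the standard inner product is the sum over the coordinates below n.\<close>

definition rvec :: "nat \<Rightarrow> (nat \<Rightarrow> real) set" where
  "rvec n = {v. \<forall>k\<ge>n. v k = 0}"

definition ip :: "nat \<Rightarrow> (nat \<Rightarrow> real) \<Rightarrow> (nat \<Rightarrow> real) \<Rightarrow> real" where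
  "ip n v w = (\<Sum>k<n. v k * w k)"

text \<open>A set of lines in R^n, given by a set V of spanning unit vectors (one per line, so
  no two are equal or opposite), is equiangular if all pairwise absolute inner products agree.\<close>

definition equiangular_lines :: "nat \<Rightarrow> (nat \<Rightarrow> real) set \<Rightarrow> bool" where
  "equiangular_lines n V \<longleftrightarrow>
     V \<subseteq> rvec n \<and>
     (\<forall>v\<in>V. ip n v v = 1) \<and>
     (\<forall>v\<in>V. \<forall>w\<in>V. v \<noteq> w \<longrightarrow> w \<noteq> (\<lambda>k. - v k)) \<and>
     (\<exists>c. \<forall>v\<in>V. \<forall>w\<in>V. v \<noteq> w \<longrightarrow> \<bar>ip n v w\<bar> = c)"

end

theory Submission
  imports Defs "HOL-Algebra.Algebraic_Closure_Type" "HOL-Library.Z2" "HOL-Library.Product_Plus"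
begin

(* Equiangular lines from a Kerdock-type family of quadratic forms over GF(2).
   Let F = GF(2^m) with m = 2h+1 odd, realised inside the algebraic closure of GF(2) as
   the fixed points of x \<mapsto> x^(2^m), and let P = F \<times> GF(2), a space of even dimension m+1
   over GF(2) with 2N points, N = 2^m.  The trace form gives quadratic forms Q a (a \<in> F)
   on P such that Q a + Q b is nondegenerate for a \<noteq> b; hence every Walsh sum
   \<Sum>p. (-1)^(Q a p + Q b p + linear) has absolute value sqrt(2N), while for fixed a the
   2N functions (-1)^(Q a + L w), L w linear, are orthogonal.
   In coordinates P \<uplus> ({\<bottom>} \<union> F), i.e. in dimension 3N+1, take the unit vectors
     (\<lambda>/\<rho> (-1)^(Q a + L w), \<mu> e_a)   for a \<in> F, w \<in> P,   and   (\<lambda> e_q, \<mu> e_\<bottom>)  for q \<in> P,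
   where \<rho> = sqrt(2N), \<lambda>^2 = \<rho>/(\<rho>+1), \<mu>^2 = 1/(\<rho>+1); all pairwise inner products
   have absolute value \<mu>^2.  This gives 2N(N+1) = 2/9 (n-1)(n+2) lines in dimension n = 3N+1.
   The file first counts the fixed points of x \<mapsto> x^N and shows how a family of vectors with
   constant absolute inner products yields equiangular lines in the coordinate model of R^n;
   it then develops the trace and quadratic forms over F, the Walsh-sum estimates, and the
   vectors, and derives the theorem for m = 2t-1. *)

section \<open>Counting the points of a finite subfield\<close>

text \<open>In an algebraically closed field whose characteristic divides N \<ge> 2, the polynomial
  X^N - X is separable (its derivative is -1), so it has exactly N roots.\<close>

lemma card_fixed_points_power:
  fixes N :: nat
  assumes char: "(of_nat N :: 'a::alg_closed_field) = 0" and N: "N \<ge> 2"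
  shows "card {x::'a. x ^ N = x} = N"
proof -
  define p :: "'a poly" where "p = monom 1 N - [:0,1:]"
  have deg: "degree p = N" using N unfolding p_def diff_conv_add_uminus
    by (subst degree_add_eq_left) (auto simp: degree_monom_eq)
  hence p0: "p \<noteq> 0" using N by auto
  have lc: "lead_coeff p = 1" using N deg unfolding p_def
    by (cases N) (simp_all add: coeff_monom coeff_pCons split: nat.splits)
  have dp: "pderiv p = -1" unfolding p_def
    by (simp add: pderiv_monom pderiv_diff char pderiv_pCons one_pCons)
  obtain A where A: "size A = N" "p = smult 1 (\<Prod>x\<in>#A. [:-x, 1:])"
    using alg_closed_imp_factorization[OF p0] deg lc by metis
  have roots: "{x::'a. x ^ N = x} = set_mset A"
  proof -
    have "poly p x = 0 \<longleftrightarrow> x \<in># A" for x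
      by (subst A(2)) (auto simp: poly_prod_mset prod_mset_zero_iff)
    moreover have "poly p x = 0 \<longleftrightarrow> x ^ N = x" for x
      by (simp add: p_def poly_monom)
    ultimately show ?thesis by auto
  qed
  have simple: "count A x \<le> 1" for x
  proof (rule ccontr)
    assume "\<not> count A x \<le> 1"
    hence "{#x,x#} \<subseteq># A" by (simp add: subseteq_mset_def)
    then obtain B where B: "A = {#x,x#} + B" by (metis subset_mset.add_diff_inverse)
    have "p = [:-x,1:]^2 * (\<Prod>y\<in>#B. [:-y, 1:])"
      using A(2) B by (simp add: power2_eq_square mult.assoc del: mult_pCons_left mult_pCons_right)
    hence "poly (pderiv p) x = 0"
      by (simp add: pderiv_mult pderiv_power)
    thus False using dp by simp
  qed
  have "size A = card (set_mset A)"
    by (subst size_multiset_overloaded_eq)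
       (metis (no_types, lifting) card_eq_sum simple count_eq_zero_iff le_antisym less_one not_le sum.cong)
  thus ?thesis using roots A(1) by simp
qed

lemma alg_closure_bit_char2: "(2 :: bit alg_closure) = 0"
proof -
  have "(2 :: bit alg_closure) = to_ac (2::bit)" by (simp only: to_ac_numeral)
  also have "(2::bit) = 0" by simp
  finally show ?thesis by simp
qed

section \<open>Equiangular lines from a family of vectors\<close>

text \<open>A family of unit vectors indexed by J, in coordinates indexed by a finite set I of
  size n, with all pairwise inner products of absolute value c \<noteq> 1, yields |J| equiangular
  lines in the coordinate model of R^n: since c \<noteq> 1, distinct indices give vectors that are
  neither equal nor opposite.\<close>

lemma equiangular_lines_from_vectors:
  fixes vec :: "'j \<Rightarrow> 'i \<Rightarrow> real" and I :: "'i set" and J :: "'j set"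
  assumes finI: "finite I" and finJ: "finite J" and cI: "card I = n"
    and unit: "\<And>j. j \<in> J \<Longrightarrow> (\<Sum>i\<in>I. vec j i * vec j i) = 1"
    and angle: "\<And>j j'. j \<in> J \<Longrightarrow> j' \<in> J \<Longrightarrow> j \<noteq> j' \<Longrightarrow> \<bar>\<Sum>i\<in>I. vec j i * vec j' i\<bar> = c"
    and c1: "c \<noteq> 1"
  shows "\<exists>V. finite V \<and> equiangular_lines n V \<and> card V = card J"
proof -
  obtain g where g: "bij_betw g {0..<n} I" using ex_bij_betw_nat_finite[OF finI] cI by blast
  define emb where "emb j = (\<lambda>k. if k < n then vec j (g k) else 0)" for j
  have ip_emb: "ip n (emb j) (emb j') = (\<Sum>i\<in>I. vec j i * vec j' i)" for j j'
  proof -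
    have "ip n (emb j) (emb j') = (\<Sum>k\<in>{0..<n}. vec j (g k) * vec j' (g k))"
      unfolding ip_def emb_def by (simp add: atLeast0LessThan)
    also have "\<dots> = (\<Sum>i\<in>I. vec j i * vec j' i)"
      by (rule sum.reindex_bij_betw[OF g])
    finally show ?thesis .
  qed
  have inj: "inj_on emb J"
  proof
    fix j j' assume jj: "j \<in> J" "j' \<in> J" "emb j = emb j'"
    show "j = j'"
    proof (rule ccontr)
      assume "j \<noteq> j'"
      hence "\<bar>ip n (emb j) (emb j')\<bar> = c" using angle[OF jj(1,2)] by (simp add: ip_emb)
      moreover have "ip n (emb j) (emb j') = 1" using jj(3) ip_emb unit[OF jj(1)] by metis
      ultimately show False using c1 by simp
    qed
  qed
  define V where "V = emb ` J"
  have "equiangular_lines n V"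
    unfolding equiangular_lines_def
  proof (intro conjI ballI impI exI[of _ c])
    show "V \<subseteq> rvec n" by (auto simp: V_def rvec_def emb_def)
    fix v assume "v \<in> V"
    then obtain j where j: "j \<in> J" "v = emb j" by (auto simp: V_def)
    show "ip n v v = 1" using j ip_emb unit by simp
    fix w assume "w \<in> V" "v \<noteq> w"
    then obtain j' where j': "j' \<in> J" "w = emb j'" by (auto simp: V_def)
    have ne: "j \<noteq> j'" using j j' \<open>v \<noteq> w\<close> by auto
    show "\<bar>ip n v w\<bar> = c" using j j' ne angle ip_emb by simp
    show "w \<noteq> (\<lambda>k. - v k)"
    proof
      assume w: "w = (\<lambda>k. - v k)"
      have "ip n v w = - ip n v v" unfolding w ip_def by (simp add: sum_negf)
      hence "\<bar>ip n v w\<bar> = 1" using j ip_emb unit by simp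
      thus False using j j' ne angle ip_emb c1 by simp
    qed
  qed
  moreover have "card V = card J" unfolding V_def using card_image[OF inj] .
  moreover have "finite V" using finJ by (simp add: V_def)
  ultimately show ?thesis by blast
qed

section \<open>Trace and quadratic forms over GF(2^m), m odd\<close>

definition chi :: "'a::field \<Rightarrow> real" where "chi x = (if x = 0 then 1 else -1)"

lemma chi_abs [simp]: "\<bar>chi x\<bar> = 1" by (simp add: chi_def)

lemma chi_square: "chi x * chi x = 1" by (simp add: chi_def)

locale odd_binary_field =
  fixes GF :: "'a::field set" and m h :: nat
  assumes char2: "(2::'a) = 0" and m_odd: "m = 2*h+1" and GF_eq: "GF = {x. x^(2^m) = x}"
begin

lemma add_self [simp]: "(x::'a) + x = 0"
  by (metis mult_2 mult_zero_left char2)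

lemma add_eq_0_iff: "(x::'a) + y = 0 \<longleftrightarrow> x = y"
  by (metis add_self add_left_cancel)

lemma chi_add: "(x::'a) \<in> {0,1} \<Longrightarrow> y \<in> {0,1} \<Longrightarrow> chi (x + y) = chi x * chi y"
  by (auto simp: chi_def)

lemma zero_one_add: "x \<in> {0,1::'a} \<Longrightarrow> y \<in> {0,1} \<Longrightarrow> x + y \<in> {0,1}"
  by auto

lemma zero_one_mult: "x \<in> {0,1::'a} \<Longrightarrow> y \<in> {0,1} \<Longrightarrow> x * y \<in> {0,1}"
  by auto

lemma zero_one_sum: "(\<And>i. i \<in> A \<Longrightarrow> f i \<in> {0,1::'a}) \<Longrightarrow> sum f A \<in> {0,1}"
proof (induction A rule: infinite_finite_induct)
  case (insert x A)
  hence "f x \<in> {0,1}" "sum f A \<in> {0,1}" by auto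
  thus ?case using insert(1,2) zero_one_add by simp
qed auto

lemma pow2_pow2: "((x::'a)^(2^a))^(2^b) = x^(2^(a+b))"
  by (simp add: power_mult[symmetric] power_add)

lemma pow2_square: "((x::'a)^(2^a))^2 = x^(2^(Suc a))"
  using pow2_pow2[of x a 1] by simp

lemma square_pow2: "((x::'a)^2)^(2^i) = x^(2^Suc i)"
  by (simp add: power_mult[symmetric])

lemma frobenius_add: "((x::'a) + y) ^ (2^k) = x^(2^k) + y^(2^k)"
proof (induction k)
  case (Suc k)
  have "(x+y)^(2^Suc k) = ((x+y)^(2^k))^2" by (simp only: pow2_square)
  also have "\<dots> = (x^(2^k))^2 + (y^(2^k))^2" unfolding Suc power2_sum by (simp add: char2)
  also have "\<dots> = x^(2^Suc k) + y^(2^Suc k)" by (simp only: pow2_square)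
  finally show ?case .
qed simp

lemma frobenius_sum: "(sum (f::_\<Rightarrow>'a) A) ^ (2^k) = (\<Sum>i\<in>A. (f i)^(2^k))"
  by (induction A rule: infinite_finite_induct) (auto simp: frobenius_add)

lemma GF_iff: "x \<in> GF \<longleftrightarrow> x^(2^m) = x" by (simp add: GF_eq)

lemma GF_add: "x \<in> GF \<Longrightarrow> y \<in> GF \<Longrightarrow> x + y \<in> GF" by (simp add: GF_iff frobenius_add)
lemma GF_mult: "x \<in> GF \<Longrightarrow> y \<in> GF \<Longrightarrow> x * y \<in> GF" by (simp add: GF_iff power_mult_distrib)
lemma GF_inverse: "x \<in> GF \<Longrightarrow> inverse x \<in> GF" by (simp add: GF_iff power_inverse)
lemma GF_0: "0 \<in> GF" by (simp add: GF_iff)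
lemma GF_1: "1 \<in> GF" by (simp add: GF_iff)

lemma GF_power: assumes "x \<in> GF" shows "x ^ k \<in> GF"
proof -
  have "(x^k)^(2^m) = (x^(2^m))^k" by (metis power_mult mult.commute)
  thus ?thesis using assms by (simp add: GF_iff)
qed

definition Tr :: "'a \<Rightarrow> 'a" where "Tr x = (\<Sum>i<m. x^(2^i))"

lemma Tr_add: "Tr (x + y) = Tr x + Tr y" by (simp add: Tr_def frobenius_add sum.distrib)

lemma Tr_0 [simp]: "Tr 0 = 0" by (simp add: Tr_def zero_power)

text \<open>Since m is odd, the trace of 1 is 1; this is where the parity of m is used.\<close>

lemma Tr_1: "Tr 1 = 1"
proof -
  have "Tr 1 = of_nat m" by (simp add: Tr_def)
  also have "\<dots> = 2 * of_nat h + 1" by (simp add: m_odd)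
  finally show ?thesis by (simp add: char2)
qed

lemma Tr_scale: "c \<in> {0,1} \<Longrightarrow> Tr (c * z) = c * Tr z" by auto

lemma Tr_square_eq: "(Tr x)^2 = Tr (x^2)"
  using frobenius_sum[of "\<lambda>i. x^(2^i)" "{..<m}" 1]
  by (simp add: Tr_def pow2_square square_pow2 del: power_Suc)

lemma Tr_square: assumes "x \<in> GF" shows "Tr (x^2) = Tr x"
proof -
  obtain m' where m': "m = Suc m'" using m_odd by auto
  have xm: "x^(2^m) = x" using assms by (simp add: GF_iff)
  have "Tr (x^2) = (\<Sum>i<m. x^(2^Suc i))"
    unfolding Tr_def by (intro sum.cong refl) (simp add: square_pow2)
  also have "\<dots> = (\<Sum>i<m'. x^(2^Suc i)) + x^(2^m)" by (simp add: m')
  also have "\<dots> = x^(2^0) + (\<Sum>i<m'. x^(2^Suc i))" using xm by simp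
  also have "\<dots> = Tr x" unfolding Tr_def by (simp only: m' sum.lessThan_Suc_shift)
  finally show ?thesis .
qed

lemma Tr_zero_one: assumes "x \<in> GF" shows "Tr x \<in> {0,1}"
proof -
  have "Tr x * Tr x = Tr x" using Tr_square_eq[of x] Tr_square[OF assms] by (simp add: power2_eq_square)
  hence "Tr x * (Tr x - 1) = 0" by (simp add: algebra_simps)
  thus ?thesis by auto
qed

lemma Tr_frobenius: assumes "x \<in> GF" shows "Tr (x^(2^k)) = Tr x"
proof (induction k)
  case (Suc k)
  have "x^(2^Suc k) = (x^(2^k))^2" by (simp only: pow2_square)
  thus ?case using Tr_square[OF GF_power[OF assms, of "2^k"]] Suc by simp
qed simp

lemma Tr_nondegenerate:
  assumes "z \<in> GF" "\<And>x. x \<in> GF \<Longrightarrow> Tr (x * z) = 0" shows "z = 0"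
proof (rule ccontr)
  assume "z \<noteq> 0"
  hence "Tr (inverse z * z) = 1" by (simp add: Tr_1)
  with assms(2)[OF GF_inverse[OF assms(1)]] show False by simp
qed

lemma Tr_conjugates_product: assumes "z \<in> GF" "w \<in> GF"
  shows "(\<Sum>k<m. Tr (z^(2^k) * w)) = Tr z * Tr w"
proof -
  have "(\<Sum>k<m. Tr (z^(2^k) * w)) = (\<Sum>k<m. \<Sum>i<m. (z^(2^i))^(2^k) * w^(2^i))"
    unfolding Tr_def by (intro sum.cong refl) (simp add: power_mult_distrib pow2_pow2 add.commute)
  also have "\<dots> = (\<Sum>i<m. w^(2^i) * (\<Sum>k<m. (z^(2^i))^(2^k)))"
    by (subst sum.swap) (simp add: sum_distrib_left mult.commute)
  also have "\<dots> = (\<Sum>i<m. w^(2^i) * Tr z)"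
    using Tr_frobenius[OF assms(1)] by (simp add: Tr_def[symmetric])
  also have "\<dots> = Tr z * Tr w" by (simp add: Tr_def sum_distrib_right mult.commute)
  finally show ?thesis .
qed

lemma Tr_swap_frobenius: assumes "z \<in> GF" "w \<in> GF" "k \<le> m"
  shows "Tr (w^(2^k) * z) = Tr (z^(2^(m-k)) * w)"
proof -
  have "(z^(2^(m-k)) * w)^(2^k) = z^(2^m) * w^(2^k)"
    using assms(3) by (simp add: power_mult_distrib pow2_pow2)
  also have "\<dots> = w^(2^k) * z" using assms(1) by (simp add: GF_iff mult.commute)
  finally show ?thesis
    using Tr_frobenius[OF GF_mult[OF GF_power[OF assms(1), of "2^(m-k)"] assms(2)], of k] by simp
qed

definition G :: "'a \<Rightarrow> 'a" where "G z = (\<Sum>k\<in>{1..h}. Tr (z^(2^k+1)))"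

lemma G_0: "G 0 = 0" by (simp add: G_def zero_power)

lemma G_zero_one: "z \<in> GF \<Longrightarrow> G z \<in> {0,1}"
  unfolding G_def by (intro zero_one_sum Tr_zero_one GF_power)

lemma G_polar: assumes "z \<in> GF" "w \<in> GF"
  shows "G (z + w) = G z + G w + Tr z * Tr w + Tr (z * w)"
proof -
  have expand: "(z+w)^(2^k+1) = z^(2^k+1) + w^(2^k+1) + (z^(2^k) * w + w^(2^k) * z)" for k
    by (simp add: frobenius_add algebra_simps)
  have "G (z + w) = G z + G w + ((\<Sum>k\<in>{1..h}. Tr (z^(2^k) * w)) + (\<Sum>k\<in>{1..h}. Tr (w^(2^k) * z)))"
    unfolding G_def expand by (simp add: Tr_add sum.distrib)
  also have "(\<Sum>k\<in>{1..h}. Tr (w^(2^k) * z)) = (\<Sum>k\<in>{1..h}. Tr (z^(2^(m-k)) * w))"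
    by (intro sum.cong refl Tr_swap_frobenius assms) (auto simp: m_odd)
  also have "\<dots> = (\<Sum>j\<in>{h+1..2*h}. Tr (z^(2^j) * w))"
    by (rule sum.reindex_bij_witness[of _ "\<lambda>j. m - j" "\<lambda>k. m - k"]) (auto simp: m_odd)
  also have "(\<Sum>k\<in>{1..h}. Tr (z^(2^k) * w)) + \<dots> = (\<Sum>k\<in>{1..2*h}. Tr (z^(2^k) * w))"
    by (subst sum.union_disjoint[symmetric]) (auto intro: sum.cong)
  also have "\<dots> = Tr z * Tr w + Tr (z * w)"
  proof -
    have "{..<m} = insert 0 {1..2*h}" by (auto simp: m_odd)
    hence "(\<Sum>k<m. Tr (z^(2^k) * w)) = Tr (z * w) + (\<Sum>k\<in>{1..2*h}. Tr (z^(2^k) * w))"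
      by simp
    thus ?thesis using Tr_conjugates_product[OF assms] by (metis add.assoc add.commute add_self add_0)
  qed
  finally show ?thesis by (simp add: add.assoc)
qed

end

section \<open>Walsh sums on the space P = GF \<times> GF(2)\<close>

locale kerdock = odd_binary_field GF m h for GF :: "'a::field set" and m h +
  assumes GF_finite: "finite GF"
begin

definition Vsp :: "('a \<times> 'a) set" where "Vsp = GF \<times> {0,1}"

lemma Vsp_iff: "p \<in> Vsp \<longleftrightarrow> fst p \<in> GF \<and> snd p \<in> {0,1}"
  by (cases p) (auto simp: Vsp_def)

lemma Vsp_finite: "finite Vsp" using GF_finite by (simp add: Vsp_def)
lemma Vsp_add: "p \<in> Vsp \<Longrightarrow> q \<in> Vsp \<Longrightarrow> p + q \<in> Vsp" by (auto simp: Vsp_def GF_add)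
lemma Vsp_0: "0 \<in> Vsp" by (simp add: Vsp_def zero_prod_def GF_0)
lemma card_Vsp_pos: "card Vsp > 0" using Vsp_finite Vsp_0 by (auto simp: card_gt_0_iff)

lemma pair_add_self: "(p::'a\<times>'a) + p = 0" by (simp add: plus_prod_def zero_prod_def)
lemma pair_add_cancel_right: "(p::'a\<times>'a) + q + q = p" by (metis add.assoc pair_add_self add.right_neutral)
lemma pair_add_cancel_left: "(p::'a\<times>'a) + (p + q) = q" by (metis add.assoc pair_add_self add.left_neutral)

text \<open>Character sums of linear functionals: a nonzero one has sum 0 (shift by a point
  where it equals 1).\<close>

lemma chi_sum_linear_nonzero:
  fixes f :: "'a \<times> 'a \<Rightarrow> 'a"
  assumes add: "\<And>p q. p \<in> Vsp \<Longrightarrow> q \<in> Vsp \<Longrightarrow> f (p + q) = f p + f q"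
    and zero_one: "\<And>p. p \<in> Vsp \<Longrightarrow> f p \<in> {0,1}"
    and p0: "p0 \<in> Vsp" "f p0 \<noteq> 0"
  shows "(\<Sum>p\<in>Vsp. chi (f p)) = 0"
proof -
  have f1: "f p0 = 1" using zero_one[OF p0(1)] p0(2) by auto
  have "(\<Sum>p\<in>Vsp. chi (f p)) = (\<Sum>p\<in>Vsp. chi (f (p + p0)))"
    by (rule sum.reindex_bij_witness[of _ "\<lambda>p. p + p0" "\<lambda>p. p + p0"])
       (auto simp: pair_add_cancel_right Vsp_add p0)
  also have "\<dots> = (\<Sum>p\<in>Vsp. - chi (f p))"
  proof (intro sum.cong refl)
    fix p assume p: "p \<in> Vsp"
    have "f (p + p0) = f p + 1" using add[OF p p0(1)] f1 by simp
    moreover have "f p = 0 \<or> f p = 1" using zero_one[OF p] by auto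
    ultimately show "chi (f (p + p0)) = - chi (f p)" by (auto simp: chi_def)
  qed
  finally show ?thesis by (simp add: sum_negf)
qed

lemma chi_sum_linear:
  fixes f :: "'a \<times> 'a \<Rightarrow> 'a"
  assumes add: "\<And>p q. p \<in> Vsp \<Longrightarrow> q \<in> Vsp \<Longrightarrow> f (p + q) = f p + f q"
    and zero_one: "\<And>p. p \<in> Vsp \<Longrightarrow> f p \<in> {0,1}"
  shows "(\<Sum>p\<in>Vsp. chi (f p)) = (if \<forall>p\<in>Vsp. f p = 0 then real (card Vsp) else 0)"
proof (cases "\<forall>p\<in>Vsp. f p = 0")
  case True thus ?thesis by (simp add: chi_def)
next
  case False
  then obtain p0 where "p0 \<in> Vsp" "f p0 \<noteq> 0" by auto
  from chi_sum_linear_nonzero[OF add zero_one this] False show ?thesis by auto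
qed

text \<open>The square is expanded
  as a double sum, reindexed by q \<mapsto> p+q, and the inner sums are character sums of
  linear functionals.\<close>

lemma walsh_square:
  fixes R :: "'a \<times> 'a \<Rightarrow> 'a"
  assumes R_zero_one: "\<And>p. p \<in> Vsp \<Longrightarrow> R p \<in> {0,1}" and R0: "R 0 = 0"
    and polar_additive: "\<And>p p' q. p \<in> Vsp \<Longrightarrow> p' \<in> Vsp \<Longrightarrow> q \<in> Vsp \<Longrightarrow>
        R (p + p' + q) + R (p + p') + R q = (R (p + q) + R p + R q) + (R (p' + q) + R p' + R q)"
    and radical: "\<And>q. q \<in> Vsp \<Longrightarrow> (\<forall>p\<in>Vsp. R (p + q) + R p + R q = 0) \<Longrightarrow> q = 0"
  shows "(\<Sum>p\<in>Vsp. chi (R p))^2 = real (card Vsp)"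
proof -
  define D where "D p q = R (p + q) + R p + R q" for p q
  have D_zero_one: "D p q \<in> {0,1}" if "p \<in> Vsp" "q \<in> Vsp" for p q
    unfolding D_def by (intro zero_one_add R_zero_one Vsp_add that)
  have chi_R_add: "chi (R (p + q)) = chi (R p) * chi (R q) * chi (D p q)"
    if "p \<in> Vsp" "q \<in> Vsp" for p q
  proof -
    have "R (p + q) = (R p + R q) + D p q" by (simp add: D_def algebra_simps char2)
    moreover have "R p \<in> {0,1}" "R q \<in> {0,1}" "D p q \<in> {0,1}"
      using that R_zero_one D_zero_one by auto
    ultimately show ?thesis using chi_add zero_one_add by metis
  qed
  have inner: "(\<Sum>p\<in>Vsp. chi (D p q)) = (if q = 0 then real (card Vsp) else 0)"
    if q: "q \<in> Vsp" for q
  proof -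
    have "(\<Sum>p\<in>Vsp. chi (D p q)) = (if \<forall>p\<in>Vsp. D p q = 0 then real (card Vsp) else 0)"
    proof (rule chi_sum_linear)
      show "D (p + p') q = D p q + D p' q" if "p \<in> Vsp" "p' \<in> Vsp" for p p'
        unfolding D_def using polar_additive[OF that q] .
      show "D p q \<in> {0,1}" if "p \<in> Vsp" for p using D_zero_one[OF that q] .
    qed
    moreover have "(\<forall>p\<in>Vsp. D p q = 0) \<longleftrightarrow> q = 0"
      using radical[OF q] by (auto simp: D_def R0)
    ultimately show ?thesis by simp
  qed
  have "(\<Sum>p\<in>Vsp. chi (R p))^2 = (\<Sum>p\<in>Vsp. \<Sum>q\<in>Vsp. chi (R p) * chi (R q))"
    by (simp add: power2_eq_square sum_product)
  also have "\<dots> = (\<Sum>p\<in>Vsp. \<Sum>q\<in>Vsp. chi (R p) * chi (R (p + q)))"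
  proof (rule sum.cong[OF refl])
    fix p assume p: "p \<in> Vsp"
    show "(\<Sum>q\<in>Vsp. chi (R p) * chi (R q)) = (\<Sum>q\<in>Vsp. chi (R p) * chi (R (p + q)))"
      by (rule sum.reindex_bij_witness[of _ "\<lambda>q. p + q" "\<lambda>q. p + q"])
         (simp_all add: p Vsp_add pair_add_cancel_left)
  qed
  also have "\<dots> = (\<Sum>p\<in>Vsp. \<Sum>q\<in>Vsp. chi (R q) * chi (D p q))"
    by (intro sum.cong refl) (simp add: chi_R_add mult.assoc[symmetric] chi_square)
  also have "\<dots> = (\<Sum>q\<in>Vsp. chi (R q) * (\<Sum>p\<in>Vsp. chi (D p q)))"
    by (subst sum.swap) (simp add: sum_distrib_left)
  also have "\<dots> = (\<Sum>q\<in>Vsp. if q = 0 then chi (R q) * real (card Vsp) else 0)"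
    by (intro sum.cong refl) (simp add: inner)
  also have "\<dots> = real (card Vsp)"
    using Vsp_0 Vsp_finite by (simp add: R0 chi_def)
  finally show ?thesis .
qed

section \<open>The family of quadratic forms Q a on P\<close>

text \<open>Square root in GF, the inverse of the Frobenius x \<mapsto> x^2.\<close>

definition sqroot :: "'a \<Rightarrow> 'a" where "sqroot a = a^(2^(m-1))"

lemma sqroot_GF: "a \<in> GF \<Longrightarrow> sqroot a \<in> GF" unfolding sqroot_def by (rule GF_power)

lemma sqroot_square: assumes "a \<in> GF" shows "sqroot a * sqroot a = a"
proof -
  have "sqroot a * sqroot a = a^(2^Suc (m-1))"
    unfolding sqroot_def using pow2_square[of a "m-1"] by (simp add: power2_eq_square)
  also have "Suc (m-1) = m" by (simp add: m_odd)
  finally show ?thesis using assms by (simp add: GF_iff)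
qed

lemma sqroot_inj: "a \<in> GF \<Longrightarrow> b \<in> GF \<Longrightarrow> sqroot a = sqroot b \<Longrightarrow> a = b"
  by (metis sqroot_square)

definition Q :: "'a \<Rightarrow> 'a \<times> 'a \<Rightarrow> 'a" where
  "Q a p = G (sqroot a * fst p) + snd p * Tr (sqroot a * fst p)"

definition L :: "'a \<times> 'a \<Rightarrow> 'a \<times> 'a \<Rightarrow> 'a" where
  "L w p = Tr (fst p * fst w) + snd p * snd w"

definition B :: "'a \<Rightarrow> 'a \<times> 'a \<Rightarrow> 'a \<times> 'a \<Rightarrow> 'a" where
  "B a p q = Tr (sqroot a * fst p) * Tr (sqroot a * fst q) + Tr (sqroot a * fst p * (sqroot a * fst q))
     + snd p * Tr (sqroot a * fst q) + snd q * Tr (sqroot a * fst p)"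

lemma Q_zero_one: "a \<in> GF \<Longrightarrow> p \<in> Vsp \<Longrightarrow> Q a p \<in> {0,1}"
  unfolding Q_def
  by (intro zero_one_add zero_one_mult G_zero_one Tr_zero_one GF_mult sqroot_GF) (auto simp: Vsp_iff)

lemma L_zero_one: "w \<in> Vsp \<Longrightarrow> p \<in> Vsp \<Longrightarrow> L w p \<in> {0,1}"
  unfolding L_def by (intro zero_one_add zero_one_mult Tr_zero_one GF_mult) (auto simp: Vsp_iff)

lemma Q_0: "Q a 0 = 0" by (simp add: Q_def G_0)
lemma L_0: "L w 0 = 0" by (simp add: L_def)
lemma L_add_right: "L w (p + q) = L w p + L w q" by (simp add: L_def Tr_add algebra_simps)
lemma L_add_left: "L (w + w') p = L w p + L w' p" by (simp add: L_def Tr_add algebra_simps)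
lemma B_add: "B a (p + p') q = B a p q + B a p' q" by (simp add: B_def Tr_add algebra_simps)

lemma L_nondegenerate: assumes "w \<in> Vsp" "\<And>p. p \<in> Vsp \<Longrightarrow> L w p = 0" shows "w = 0"
proof -
  have "L w (0,1) = 0" by (rule assms(2)) (simp add: Vsp_iff GF_0)
  hence snd_w: "snd w = 0" by (simp add: L_def)
  have "fst w = 0"
  proof (rule Tr_nondegenerate)
    show "fst w \<in> GF" using assms(1) by (simp add: Vsp_iff)
    fix x assume "x \<in> GF"
    hence "L w (x,0) = 0" by (intro assms(2)) (simp add: Vsp_iff)
    thus "Tr (x * fst w) = 0" by (simp add: L_def)
  qed
  with snd_w show ?thesis by (simp add: prod_eq_iff)
qed

lemma Q_polar: assumes "a \<in> GF" "p \<in> Vsp" "q \<in> Vsp"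
  shows "Q a (p + q) + Q a p + Q a q = B a p q"
proof -
  define s where "s = sqroot a"
  have xF: "s * fst p \<in> GF" "s * fst q \<in> GF"
    using assms by (auto simp: Vsp_iff s_def intro: GF_mult sqroot_GF)
  have "Q a (p + q) = G (s * fst p + s * fst q) + (snd p + snd q) * (Tr (s * fst p) + Tr (s * fst q))"
    by (simp add: Q_def s_def[symmetric] distrib_left Tr_add)
  also have "G (s * fst p + s * fst q) = G (s * fst p) + G (s * fst q)
      + Tr (s * fst p) * Tr (s * fst q) + Tr (s * fst p * (s * fst q))"
    by (rule G_polar[OF xF])
  finally have "Q a (p + q) + Q a p + Q a q
      = B a p q + 2 * (G (s * fst p) + G (s * fst q) + snd p * Tr (s * fst p) + snd q * Tr (s * fst q))"
    by (simp add: Q_def B_def s_def[symmetric] algebra_simps)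
  thus ?thesis by (simp add: char2)
qed

lemma B_at_unit: "B a (0,1) q = Tr (sqroot a * fst q)"
  by (simp add: B_def)

lemma B_at_field: assumes "a \<in> GF" "q \<in> Vsp"
  shows "B a (x,0) q = Tr (x * (sqroot a * (Tr (sqroot a * fst q) + snd q) + a * fst q))"
proof -
  define s where "s = sqroot a"
  define \<alpha> where "\<alpha> = Tr (s * fst q)"
  have "\<alpha> \<in> {0,1}" unfolding \<alpha>_def s_def
    using assms by (intro Tr_zero_one GF_mult sqroot_GF) (auto simp: Vsp_iff)
  have "snd q \<in> {0,1}" using assms(2) by (simp add: Vsp_iff)
  have "x * (s * (\<alpha> + snd q) + (s * s) * fst q) = \<alpha> * (s * x) + snd q * (s * x) + s * x * (s * fst q)"
    by (simp add: algebra_simps)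
  hence "Tr (x * (s * (\<alpha> + snd q) + a * fst q)) = \<alpha> * Tr (s * x) + snd q * Tr (s * x) + Tr (s * x * (s * fst q))"
    using sqroot_square[OF assms(1)] \<open>\<alpha> \<in> {0,1}\<close> \<open>snd q \<in> {0,1}\<close>
    by (simp add: s_def Tr_add Tr_scale)
  thus ?thesis by (simp add: B_def s_def[symmetric] \<alpha>_def[symmetric] mult.commute)
qed

text \<open>With s, t the square roots
  of a, b and q = (y, \<delta>): testing at (0,1) gives Tr(sy) = Tr(ty) = \<alpha>; testing at all (x,0)
  gives (s+t)(\<alpha>+\<delta>) + (s+t)^2 y = 0, so (s+t) y = \<alpha>+\<delta> has trace 0, forcing \<alpha>+\<delta> = 0
  (as Tr 1 = 1) and then y = 0, \<delta> = 0.\<close>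

lemma B_sum_nondegenerate:
  assumes a: "a \<in> GF" "b \<in> GF" "a \<noteq> b" and q: "q \<in> Vsp"
    and radical: "\<And>p. p \<in> Vsp \<Longrightarrow> B a p q + B b p q = 0"
  shows "q = 0"
proof -
  obtain y \<delta> where q_eq: "q = (y, \<delta>)" and y: "y \<in> GF" and \<delta>: "\<delta> \<in> {0,1}"
    using q by (cases q) (auto simp: Vsp_def)
  define s where "s = sqroot a"
  define t where "t = sqroot b"
  define \<alpha> where "\<alpha> = Tr (s * y)"
  have s: "s \<in> GF" "s * s = a" and t: "t \<in> GF" "t * t = b"
    using a by (auto simp: s_def t_def sqroot_GF sqroot_square)
  have \<alpha>: "\<alpha> \<in> {0,1}" unfolding \<alpha>_def by (rule Tr_zero_one[OF GF_mult[OF s(1) y]])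
  have "Tr (s * y) + Tr (t * y) = 0"
    using radical[of "(0,1)"] by (simp add: Vsp_iff GF_0 B_at_unit q_eq s_def t_def)
  hence \<beta>: "Tr (t * y) = \<alpha>" by (simp add: add_eq_0_iff \<alpha>_def)
  have st: "s + t \<noteq> 0"
    using a sqroot_inj by (auto simp: add_eq_0_iff s_def t_def)
  have "(s + t) * (\<alpha> + \<delta>) + (a + b) * y = 0"
  proof (rule Tr_nondegenerate)
    show "(s + t) * (\<alpha> + \<delta>) + (a + b) * y \<in> GF"
      using a(1,2) s(1) t(1) y \<alpha> \<delta> GF_0 GF_1 by (intro GF_add GF_mult) auto
    fix x assume "x \<in> GF"
    have "B a (x,0) q + B b (x,0) q = 0" using radical \<open>x \<in> GF\<close> by (simp add: Vsp_iff)
    thus "Tr (x * ((s + t) * (\<alpha> + \<delta>) + (a + b) * y)) = 0"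
      using B_at_field[OF a(1) q] B_at_field[OF a(2) q] \<beta>
      by (simp add: q_eq s_def[symmetric] t_def[symmetric] \<alpha>_def[symmetric] Tr_add[symmetric]
          algebra_simps)
  qed
  moreover have "a + b = (s + t) * (s + t)" using s t by (simp add: algebra_simps char2)
  ultimately have "(s + t) * ((\<alpha> + \<delta>) + (s + t) * y) = 0" by (simp add: algebra_simps)
  hence sty: "(s + t) * y = \<alpha> + \<delta>" using st by (simp add: add_eq_0_iff)
  have "Tr ((s + t) * y) = 0" using \<beta> by (simp add: distrib_right Tr_add \<alpha>_def)
  hence "\<alpha> + \<delta> = 0" using sty \<alpha> \<delta> Tr_1 by auto
  hence "y = 0" using sty st by simp
  hence "\<delta> = 0" using \<open>\<alpha> + \<delta> = 0\<close> by (simp add: \<alpha>_def)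
  with \<open>y = 0\<close> show "q = 0" by (simp add: q_eq zero_prod_def)
qed

lemma chi_Q_L: "a \<in> GF \<Longrightarrow> w \<in> Vsp \<Longrightarrow> p \<in> Vsp \<Longrightarrow> chi (Q a p + L w p) = chi (Q a p) * chi (L w p)"
  using Q_zero_one L_zero_one chi_add by blast

lemma walsh_same_form: assumes "a \<in> GF" "w \<in> Vsp" "w' \<in> Vsp"
  shows "(\<Sum>p\<in>Vsp. chi (Q a p + L w p) * chi (Q a p + L w' p)) = (if w = w' then real (card Vsp) else 0)"
proof -
  have ww: "w + w' \<in> Vsp" using assms Vsp_add by blast
  have "(\<Sum>p\<in>Vsp. chi (Q a p + L w p) * chi (Q a p + L w' p)) = (\<Sum>p\<in>Vsp. chi (L (w + w') p))"
  proof (rule sum.cong[OF refl])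
    fix p assume p: "p \<in> Vsp"
    have "chi (Q a p + L w p) * chi (Q a p + L w' p)
        = (chi (Q a p) * chi (Q a p)) * (chi (L w p) * chi (L w' p))"
      using chi_Q_L[OF assms(1,2) p] chi_Q_L[OF assms(1,3) p] by simp
    also have "\<dots> = chi (L w p + L w' p)"
      using chi_add L_zero_one assms p by (simp add: chi_square)
    finally show "chi (Q a p + L w p) * chi (Q a p + L w' p) = chi (L (w + w') p)"
      by (simp add: L_add_left)
  qed
  also have "\<dots> = (if \<forall>p\<in>Vsp. L (w + w') p = 0 then real (card Vsp) else 0)"
    by (rule chi_sum_linear) (simp add: L_add_right, rule L_zero_one[OF ww])
  also have "(\<forall>p\<in>Vsp. L (w + w') p = 0) \<longleftrightarrow> w = w'"
  proof
    assume "\<forall>p\<in>Vsp. L (w + w') p = 0"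
    hence "w + w' = 0" using L_nondegenerate[OF ww] by blast
    thus "w = w'" by (metis pair_add_cancel_right add_0)
  qed (simp add: pair_add_self L_def)
  finally show ?thesis .
qed

text \<open>For a \<noteq> b, Q a + L w + Q b + L w' is a nondegenerate quadratic function, so its
  Walsh sum has square |P|.\<close>

lemma walsh_distinct_forms: assumes "a \<in> GF" "b \<in> GF" "a \<noteq> b" "w \<in> Vsp" "w' \<in> Vsp"
  shows "(\<Sum>p\<in>Vsp. chi (Q a p + L w p) * chi (Q b p + L w' p))^2 = real (card Vsp)"
proof -
  define R where "R p = (Q a p + L w p) + (Q b p + L w' p)" for p
  have R_zero_one: "R p \<in> {0,1}" if "p \<in> Vsp" for p
    unfolding R_def using that assms by (intro zero_one_add Q_zero_one L_zero_one)
  have chi_R: "(\<Sum>p\<in>Vsp. chi (Q a p + L w p) * chi (Q b p + L w' p)) = (\<Sum>p\<in>Vsp. chi (R p))"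
    unfolding R_def using assms Q_zero_one L_zero_one zero_one_add chi_add
    by (intro sum.cong refl) metis
  have R_polar: "R (p + q) + R p + R q = B a p q + B b p q" if "p \<in> Vsp" "q \<in> Vsp" for p q
  proof -
    have "R (p + q) + R p + R q = (Q a (p + q) + Q a p + Q a q) + (Q b (p + q) + Q b p + Q b q)
         + 2 * (L w p + L w q + L w' p + L w' q)"
      unfolding R_def L_add_right by (simp add: algebra_simps)
    thus ?thesis using Q_polar assms that by (simp add: char2)
  qed
  have "(\<Sum>p\<in>Vsp. chi (R p))^2 = real (card Vsp)"
  proof (rule walsh_square)
    show "R 0 = 0" by (simp add: R_def Q_0 L_0)
    fix p p' q assume "p \<in> Vsp" "p' \<in> Vsp" "q \<in> Vsp"
    thus "R (p + p' + q) + R (p + p') + R q = (R (p + q) + R p + R q) + (R (p' + q) + R p' + R q)"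
      using R_polar Vsp_add by (simp add: B_add)
  next
    fix q assume "q \<in> Vsp" "\<forall>p\<in>Vsp. R (p + q) + R p + R q = 0"
    thus "q = 0" using R_polar by (intro B_sum_nondegenerate[OF assms(1-3)]) auto
  qed (rule R_zero_one)
  thus ?thesis using chi_R by simp
qed

end

section \<open>The equiangular vectors\<close>

context kerdock
begin

definition Tags :: "'a option set" where "Tags = insert None (Some ` GF)"

definition Coords :: "(('a \<times> 'a) + 'a option) set" where "Coords = Sum_Type.Plus Vsp Tags"

definition Lines :: "(('a \<times> ('a \<times> 'a)) + ('a \<times> 'a)) set" where "Lines = Sum_Type.Plus (GF \<times> Vsp) Vsp"

definition rho :: real where "rho = sqrt (real (card Vsp))"
definition lam :: real where "lam = sqrt (rho / (rho + 1))"
definition mu :: real where "mu = sqrt (1 / (rho + 1))"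

definition vec :: "('a \<times> ('a \<times> 'a)) + ('a \<times> 'a) \<Rightarrow> ('a \<times> 'a) + 'a option \<Rightarrow> real" where
  "vec j i = (case j of
      Inl (a, w) \<Rightarrow> (case i of Inl p \<Rightarrow> lam / rho * chi (Q a p + L w p)
                               | Inr tg \<Rightarrow> (if tg = Some a then mu else 0))
    | Inr q \<Rightarrow> (case i of Inl p \<Rightarrow> (if p = q then lam else 0)
                          | Inr tg \<Rightarrow> (if tg = None then mu else 0)))"

definition ipc :: "(('a \<times> 'a) + 'a option \<Rightarrow> real) \<Rightarrow> (('a \<times> 'a) + 'a option \<Rightarrow> real) \<Rightarrow> real"
  where "ipc u v = (\<Sum>i\<in>Coords. u i * v i)"

lemma vec_simps:
  "vec (Inl (a, w)) (Inl p) = lam / rho * chi (Q a p + L w p)"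
  "vec (Inl (a, w)) (Inr tg) = (if tg = Some a then mu else 0)"
  "vec (Inr q) (Inl p) = (if p = q then lam else 0)"
  "vec (Inr q) (Inr tg) = (if tg = None then mu else 0)"
  by (simp_all add: vec_def)

lemma Tags_finite: "finite Tags" using GF_finite by (simp add: Tags_def)
lemma Coords_finite: "finite Coords" using Vsp_finite Tags_finite by (simp add: Coords_def)
lemma Lines_finite: "finite Lines" using Vsp_finite GF_finite by (simp add: Lines_def)

lemma card_Vsp: "card Vsp = 2 * card GF"
  using GF_finite by (simp add: Vsp_def card_cartesian_product)

lemma card_Coords: "card Coords = 3 * card GF + 1"
proof -
  have "card Tags = card GF + 1" using GF_finite by (simp add: Tags_def card_image)
  thus ?thesis using Vsp_finite Tags_finite by (simp add: Coords_def card_Plus card_Vsp)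
qed

lemma card_Lines: "card Lines = 2 * card GF * (card GF + 1)"
  using Vsp_finite GF_finite
  by (simp add: Lines_def card_Plus card_cartesian_product card_Vsp algebra_simps)

lemma Lines_cases [consumes 1, case_names form point]:
  assumes "j \<in> Lines"
  obtains a w where "j = Inl (a, w)" "a \<in> GF" "w \<in> Vsp" | q where "j = Inr q" "q \<in> Vsp"
  using assms by (auto simp: Lines_def)

text \<open>The coefficients: \<lambda>^2 + \<mu>^2 = 1 makes the vectors unit vectors and
  \<lambda>^2/\<rho> = \<mu>^2 balances the two kinds of inner products.\<close>

lemma rho_pos: "rho > 0" using card_Vsp_pos by (simp add: rho_def)
lemma rho_square: "rho * rho = real (card Vsp)" by (simp add: rho_def)
lemma lam_square: "lam * lam = rho / (rho + 1)" using rho_pos by (simp add: lam_def)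
lemma mu_square: "mu * mu = 1 / (rho + 1)" using rho_pos by (simp add: mu_def)
lemma lam_mu: "lam * lam + mu * mu = 1" using rho_pos by (simp add: lam_square mu_square field_simps)

lemma lam_over_rho: "lam * lam / rho = mu * mu"
proof -
  have "rho + rho * rho \<noteq> 0" using mult_pos_pos[OF rho_pos rho_pos] rho_pos by linarith
  thus ?thesis using rho_pos by (simp add: lam_square mu_square field_simps)
qed

lemma mu_square_ne_1: "mu * mu \<noteq> 1" using rho_pos by (simp add: mu_square)

lemma ipc_split:
  "ipc u v = (\<Sum>p\<in>Vsp. u (Inl p) * v (Inl p)) + (\<Sum>tg\<in>Tags. u (Inr tg) * v (Inr tg))"
  unfolding ipc_def Coords_def by (subst sum.Plus[OF Vsp_finite Tags_finite]) (simp add: comp_def)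

lemma ipc_commute: "ipc u v = ipc v u" by (simp add: ipc_def mult.commute)

lemma ipc_forms: assumes "a \<in> GF" "b \<in> GF"
  shows "ipc (vec (Inl (a, w))) (vec (Inl (b, w'))) =
    lam * lam / real (card Vsp) * (\<Sum>p\<in>Vsp. chi (Q a p + L w p) * chi (Q b p + L w' p))
    + (if a = b then mu * mu else 0)"
proof -
  have "(\<Sum>p\<in>Vsp. (lam / rho * chi (Q a p + L w p)) * (lam / rho * chi (Q b p + L w' p)))
     = lam * lam / real (card Vsp) * (\<Sum>p\<in>Vsp. chi (Q a p + L w p) * chi (Q b p + L w' p))"
    by (simp add: sum_distrib_left rho_square[symmetric] algebra_simps)
  moreover have "(\<Sum>tg\<in>Tags. (if tg = Some a then mu else 0) * (if tg = Some b then mu else 0))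
     = (\<Sum>tg\<in>Tags. if tg = Some a then (if a = b then mu * mu else 0) else 0)"
    by (intro sum.cong refl) auto
  ultimately show ?thesis
    using assms Tags_finite by (simp add: ipc_split vec_simps Tags_def)
qed

lemma ipc_points: assumes "q \<in> Vsp" "q' \<in> Vsp"
  shows "ipc (vec (Inr q)) (vec (Inr q')) = (if q = q' then 1 else mu * mu)"
proof -
  have "(\<Sum>p\<in>Vsp. (if p = q then lam else 0) * (if p = q' then lam else 0))
      = (\<Sum>p\<in>Vsp. if p = q then (if q = q' then lam * lam else 0) else 0)"
    by (intro sum.cong refl) auto
  moreover have "(\<Sum>tg\<in>Tags. (if tg = None then mu else 0) * (if tg = None then mu else 0))
      = (\<Sum>tg\<in>Tags. if tg = None then mu * mu else 0)"
    by (intro sum.cong refl) auto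
  ultimately show ?thesis
    using assms Vsp_finite Tags_finite lam_mu by (simp add: ipc_split vec_simps Tags_def)
qed

lemma ipc_form_point: assumes "q \<in> Vsp"
  shows "\<bar>ipc (vec (Inl (a, w))) (vec (Inr q))\<bar> = mu * mu"
proof -
  have "(\<Sum>p\<in>Vsp. (lam / rho * chi (Q a p + L w p)) * (if p = q then lam else 0))
      = (\<Sum>p\<in>Vsp. if p = q then lam / rho * chi (Q a q + L w q) * lam else 0)"
    by (intro sum.cong refl) auto
  moreover have "(\<Sum>tg\<in>Tags. (if tg = Some a then mu else 0) * (if tg = None then mu else 0)) = 0"
    by (intro sum.neutral) auto
  ultimately have "ipc (vec (Inl (a, w))) (vec (Inr q)) = lam / rho * chi (Q a q + L w q) * lam"
    using assms Vsp_finite by (simp add: ipc_split vec_simps)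
  thus ?thesis using rho_pos lam_over_rho by (simp add: abs_mult)
qed

lemma ipc_same_form: assumes "a \<in> GF" "w \<in> Vsp" "w' \<in> Vsp"
  shows "ipc (vec (Inl (a, w))) (vec (Inl (a, w'))) = (if w = w' then 1 else mu * mu)"
  using assms card_Vsp_pos lam_mu by (simp add: ipc_forms walsh_same_form)

lemma ipc_distinct_forms: assumes "a \<in> GF" "b \<in> GF" "a \<noteq> b" "w \<in> Vsp" "w' \<in> Vsp"
  shows "\<bar>ipc (vec (Inl (a, w))) (vec (Inl (b, w')))\<bar> = mu * mu"
proof -
  define S where "S = (\<Sum>p\<in>Vsp. chi (Q a p + L w p) * chi (Q b p + L w' p))"
  have "S^2 = rho^2" unfolding S_def using walsh_distinct_forms[OF assms] rho_square
    by (simp add: power2_eq_square)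
  hence "\<bar>S\<bar> = rho" using rho_pos by (metis real_sqrt_abs abs_of_pos)
  moreover have "ipc (vec (Inl (a, w))) (vec (Inl (b, w'))) = lam * lam / (rho * rho) * S"
    using assms by (simp add: ipc_forms S_def rho_square)
  ultimately show ?thesis using rho_pos lam_over_rho by (simp add: abs_mult)
qed

lemma vec_unit: assumes "j \<in> Lines" shows "ipc (vec j) (vec j) = 1"
  using assms by (cases rule: Lines_cases) (simp_all add: ipc_same_form ipc_points)

lemma vec_angle: assumes "j \<in> Lines" "j' \<in> Lines" "j \<noteq> j'"
  shows "\<bar>ipc (vec j) (vec j')\<bar> = mu * mu"
  using assms(1)
proof (cases rule: Lines_cases)
  case (form a w)
  from assms(2) show ?thesis
  proof (cases rule: Lines_cases)
    case form': (form b w')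
    show ?thesis
    proof (cases "a = b")
      case True
      thus ?thesis using form form' assms(3) by (simp add: ipc_same_form)
    qed (use form form' in \<open>simp add: ipc_distinct_forms\<close>)
  qed (use form in \<open>simp add: ipc_form_point\<close>)
next
  case (point q)
  from assms(2) show ?thesis
  proof (cases rule: Lines_cases)
    case (form b w')
    thus ?thesis using point by (simp add: ipc_commute[of "vec (Inr q)"] ipc_form_point)
  qed (use point assms(3) in \<open>auto simp: ipc_points\<close>)
qed

lemma equiangular_lines_exist:
  "\<exists>V. finite V \<and> equiangular_lines (3 * card GF + 1) V \<and> card V = 2 * card GF * (card GF + 1)"
proof -
  have "\<exists>V. finite V \<and> equiangular_lines (card Coords) V \<and> card V = card Lines"
  proof (rule equiangular_lines_from_vectors[OF Coords_finite Lines_finite refl])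
    show "(\<Sum>i\<in>Coords. vec j i * vec j i) = 1" if "j \<in> Lines" for j
      using vec_unit[OF that] by (simp add: ipc_def)
    show "\<bar>\<Sum>i\<in>Coords. vec j i * vec j' i\<bar> = mu * mu"
      if "j \<in> Lines" "j' \<in> Lines" "j \<noteq> j'" for j j'
      using vec_angle[OF that] by (simp add: ipc_def)
  qed (rule mu_square_ne_1)
  thus ?thesis by (simp add: card_Coords card_Lines)
qed

end

theorem theorem2:
  fixes t :: nat
  assumes "t \<ge> 1"
  defines "n \<equiv> 3 * 2 ^ (2 * t - 1) + 1"
  shows "\<exists>V. finite V \<and> equiangular_lines n V \<and>
           real (card V) = 2 / 9 * (real n - 1) * (real n + 2)"
proof -
  define m where "m = 2 * t - 1"
  define GF where "GF = {x :: bit alg_closure. x ^ (2^m) = x}"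
  have m: "m \<ge> 1" using assms by (simp add: m_def)
  have "(of_nat (2^m) :: bit alg_closure) = 0"
    using m alg_closure_bit_char2 by (simp add: power_0_left)
  hence card_GF: "card GF = 2^m"
    unfolding GF_def using m by (intro card_fixed_points_power) (simp_all add: self_le_power)
  have "finite GF" using card_GF by (metis card.infinite power_not_zero zero_neq_numeral)
  then interpret kerdock GF m "t - 1"
    using alg_closure_bit_char2 assms by unfold_locales (auto simp: m_def GF_def)
  have n: "n = 3 * card GF + 1" by (simp add: n_def card_GF m_def)
  have "2 / 9 * (real n - 1) * (real n + 2) = real (2 * card GF * (card GF + 1))"
    unfolding n by (simp add: field_simps)
  thus ?thesis using equiangular_lines_exist unfolding n by metis
qed

end
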